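(* Let $\alpha_1,\alpha_2>0$ with $\alpha_1\neq\alpha_2$ and let $m\ge3(\alpha_1+\alpha_2)$. There exists a constant $C>0$ such that for all $A_1,A_2\in\mathbb{R}$ and all $A_3\in\mathbb{R}\setminus\{0\}$, $$\left|\int_0^1 e^{-i(A_1t^{\alpha_1}+A_2t^{\alpha_2}+A_3t^m)}\,t^{\alpha_1+\alpha_2-1}\,dt\right|\le C|A_3|^{-\frac{\alpha_1+\alpha_2}{m}}.$$ *)

theory Defs
  imports "HOL-Analysis.Analysis"
begin

end

theory Submission
  imports Defs
begin

(*
  Substituting u = t powr (\<alpha>1 + \<alpha>2) turns the integral into (\<alpha>1 + \<alpha>2)^-1 times
  the integral over [0,1] of cis (- phase u), where phase u = A1 u^b1 + A2 u^b2 + A3 u^M with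
  b1 + b2 = 1 and M \<ge> 3; replacing the phase by its negative (which conjugates the integrand)
  we may assume A3 > 0. Put scale = A3^(-1/M). The interval [0, scale] contributes at most scale.
  On [scale, 1], curv u = u^2 phase''(u) factors as u^b1 curv_factor u, where the derivative of
  curv_factor is u^(b2-b1-1) times the monotone function curv_factor_slope. Hence [scale, 1]
  splits into four intervals on which phase'' has constant sign, i.e. phase' is monotone. On
  each of them the first-derivative van der Corput estimate bounds the contribution of the
  region where |phase'| \<ge> 1/scale by 8 scale, and the remaining region has length at most
  8 scale: the Euler-type identity
    curv' + b1 b2 phase' = M (M - b1) (M - b2) A3 u^(M-1)
  forces phase' to grow quadratically away from the midpoint of any interval on which it
  stays small.
*)

definition constant_sign_on :: "real set \<Rightarrow> (real \<Rightarrow> real) \<Rightarrow> bool" where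
  "constant_sign_on S h \<longleftrightarrow> (\<forall>x\<in>S. 0 \<le> h x) \<or> (\<forall>x\<in>S. h x \<le> 0)"

lemma constant_sign_on_subset: "constant_sign_on S h \<Longrightarrow> T \<subseteq> S \<Longrightarrow> constant_sign_on T h"
  unfolding constant_sign_on_def by blast

lemma constant_sign_on_uminus:
  "constant_sign_on S (\<lambda>x. - h x) \<longleftrightarrow> constant_sign_on S h"
  unfolding constant_sign_on_def by auto

lemma constant_sign_on_mult_pos:
  assumes "constant_sign_on S h" and "\<And>x. x \<in> S \<Longrightarrow> 0 < w x"
  shows "constant_sign_on S (\<lambda>x. w x * h x)"
  using assms unfolding constant_sign_on_def
  by (smt (verit) mult_nonneg_nonneg mult_nonneg_nonpos)

lemma mono_or_antimono_of_constant_sign_deriv: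
  fixes h h' :: "real \<Rightarrow> real"
  assumes dh: "\<And>x. x \<in> {p..q} \<Longrightarrow> (h has_real_derivative h' x) (at x)"
    and sign: "constant_sign_on {p..q} h'"
  shows "mono_on {p..q} h \<or> antimono_on {p..q} h"
  using sign unfolding constant_sign_on_def
proof
  assume nonneg: "\<forall>x\<in>{p..q}. 0 \<le> h' x"
  have "h x \<le> h y" if "x \<in> {p..q}" "y \<in> {p..q}" "x \<le> y" for x y
    using \<open>x \<le> y\<close> by (rule DERIV_nonneg_imp_nondecreasing)
      (use that in \<open>meson atLeastAtMost_iff dh nonneg order_trans\<close>)
  then show ?thesis by (auto intro: mono_onI)
next
  assume nonpos: "\<forall>x\<in>{p..q}. h' x \<le> 0"
  have "h y \<le> h x" if "x \<in> {p..q}" "y \<in> {p..q}" "x \<le> y" for x y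
    using \<open>x \<le> y\<close> by (rule DERIV_nonpos_imp_nonincreasing)
      (use that in \<open>meson atLeastAtMost_iff dh nonpos order_trans\<close>)
  then show ?thesis by (auto intro: monotone_onI)
qed

lemma increment_le_of_deriv_le:
  fixes f g f' g' :: "real \<Rightarrow> real"
  assumes "a \<le> b"
    and "\<And>x. x \<in> {a..b} \<Longrightarrow> (f has_real_derivative f' x) (at x)"
    and "\<And>x. x \<in> {a..b} \<Longrightarrow> (g has_real_derivative g' x) (at x)"
    and "\<And>x. x \<in> {a..b} \<Longrightarrow> f' x \<le> g' x"
  shows "f b - f a \<le> g b - g a"
proof -
  have "(\<lambda>x. g x - f x) a \<le> (\<lambda>x. g x - f x) b"
  proof (rule DERIV_nonneg_imp_nondecreasing[OF \<open>a \<le> b\<close>])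
    fix x assume "a \<le> x" "x \<le> b"
    with assms(2-4) show "\<exists>y. ((\<lambda>x. g x - f x) has_real_derivative y) (at x) \<and> 0 \<le> y"
      by (intro exI[of _ "g' x - f' x"]) (auto intro: DERIV_diff)
  qed
  then show ?thesis by simp
qed

lemma mono_on_threshold_split:
  fixes f :: "real \<Rightarrow> real"
  assumes "p \<le> q" and "continuous_on {p..q} f" and mono: "mono_on {p..q} f"
  obtains z where "z \<in> {p..q}" and "p = z \<or> (\<forall>x\<in>{p..z}. f x \<le> t)"
    and "z = q \<or> (\<forall>x\<in>{z..q}. t \<le> f x)"
proof (cases "t \<le> f p")
  case True
  then have "t \<le> f x" if "x \<in> {p..q}" for x
    using mono_onD[OF mono, of p x] that assms(1) by auto
  with assms(1) show ?thesis by (intro that[of p]) auto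
next
  case below: False
  show ?thesis
  proof (cases "f q \<le> t")
    case True
    then have "f x \<le> t" if "x \<in> {p..q}" for x
      using mono_onD[OF mono, of x q] that assms(1) by auto
    with assms(1) show ?thesis by (intro that[of q]) auto
  next
    case False
    then obtain z where "p \<le> z" "z \<le> q" "f z = t"
      using IVT'[of f p t q] below assms(1,2) by auto
    with mono show ?thesis
      by (intro that[of z]) (auto intro: mono_onD[OF mono])
  qed
qed

lemma antimono_on_imp_mono_on_uminus:
  fixes f :: "'a::order \<Rightarrow> 'b::ordered_ab_group_add"
  shows "antimono_on S f \<Longrightarrow> mono_on S (\<lambda>x. - f x)"
  by (auto simp: monotone_on_def)

lemma constant_sign_on_split:
  fixes h :: "real \<Rightarrow> real"
  assumes "p \<le> q" and "continuous_on {p..q} h"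
    and "mono_on {p..q} h \<or> antimono_on {p..q} h"
  obtains z where "z \<in> {p..q}" and "constant_sign_on {p..z} h" and "constant_sign_on {z..q} h"
proof -
  have split_mono: "\<exists>z\<in>{p..q}. constant_sign_on {p..z} k \<and> constant_sign_on {z..q} k"
    if k: "continuous_on {p..q} k" "mono_on {p..q} k" for k :: "real \<Rightarrow> real"
  proof -
    obtain z where "z \<in> {p..q}" "p = z \<or> (\<forall>x\<in>{p..z}. k x \<le> 0)"
      "z = q \<or> (\<forall>x\<in>{z..q}. 0 \<le> k x)"
      using mono_on_threshold_split[OF \<open>p \<le> q\<close> k] .
    then show ?thesis unfolding constant_sign_on_def by auto
  qed
  have "continuous_on {p..q} (\<lambda>x. - h x)" using assms(2) by (intro continuous_intros)
  then have "\<exists>z\<in>{p..q}. constant_sign_on {p..z} h \<and> constant_sign_on {z..q} h"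
    using assms(3) split_mono[OF assms(2)] split_mono[of "\<lambda>x. - h x"]
      antimono_on_imp_mono_on_uminus[of "{p..q}" h] by (auto simp: constant_sign_on_uminus)
  with that show ?thesis by blast
qed

lemma mono_on_sublevel_split:
  fixes f :: "real \<Rightarrow> real"
  assumes "p \<le> q" and "continuous_on {p..q} f" and "mono_on {p..q} f" and "0 \<le> \<epsilon>"
  obtains r s where "p \<le> r" "r \<le> s" "s \<le> q"
    and "p = r \<or> (\<forall>x\<in>{p..r}. \<epsilon> \<le> \<bar>f x\<bar>)"
    and "r = s \<or> (\<forall>x\<in>{r..s}. \<bar>f x\<bar> \<le> \<epsilon>)"
    and "s = q \<or> (\<forall>x\<in>{s..q}. \<epsilon> \<le> \<bar>f x\<bar>)"
proof -
  obtain r where r: "r \<in> {p..q}" "p = r \<or> (\<forall>x\<in>{p..r}. f x \<le> -\<epsilon>)"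
    "r = q \<or> (\<forall>x\<in>{r..q}. -\<epsilon> \<le> f x)"
    using mono_on_threshold_split[OF assms(1-3)] .
  have "continuous_on {r..q} f" "mono_on {r..q} f"
    using r(1) assms(2,3) by (auto intro: continuous_on_subset mono_on_subset)
  then obtain s where s: "s \<in> {r..q}" "r = s \<or> (\<forall>x\<in>{r..s}. f x \<le> \<epsilon>)"
    "s = q \<or> (\<forall>x\<in>{s..q}. \<epsilon> \<le> f x)"
    using mono_on_threshold_split[of r q f \<epsilon>] r(1) by auto
  have "r = s \<or> (\<forall>x\<in>{r..s}. \<bar>f x\<bar> \<le> \<epsilon>)"
  proof (cases "r = s")
    case False
    with s(1) have "r \<noteq> q" by auto
    have "\<bar>f x\<bar> \<le> \<epsilon>" if "x \<in> {r..s}" for x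
    proof -
      from that s(1) have "x \<in> {r..q}" by auto
      with r(3) s(2) \<open>r \<noteq> q\<close> False that have "-\<epsilon> \<le> f x" "f x \<le> \<epsilon>" by blast+
      then show ?thesis by simp
    qed
    then show ?thesis by blast
  qed simp
  moreover have "p = r \<or> (\<forall>x\<in>{p..r}. \<epsilon> \<le> \<bar>f x\<bar>)"
    using r(2) by (auto simp: abs_if)
  moreover have "s = q \<or> (\<forall>x\<in>{s..q}. \<epsilon> \<le> \<bar>f x\<bar>)"
    using s(3) assms(4) by (auto simp: abs_if)
  ultimately show ?thesis using r(1) s(1) by (intro that[of r s]) auto
qed

lemma sublevel_split:
  fixes f :: "real \<Rightarrow> real"
  assumes "p \<le> q" and "continuous_on {p..q} f"
    and "mono_on {p..q} f \<or> antimono_on {p..q} f" and "0 \<le> \<epsilon>"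
  obtains r s where "p \<le> r" "r \<le> s" "s \<le> q"
    and "p = r \<or> (\<forall>x\<in>{p..r}. \<epsilon> \<le> \<bar>f x\<bar>)"
    and "r = s \<or> (\<forall>x\<in>{r..s}. \<bar>f x\<bar> \<le> \<epsilon>)"
    and "s = q \<or> (\<forall>x\<in>{s..q}. \<epsilon> \<le> \<bar>f x\<bar>)"
  using assms(3)
proof
  assume "mono_on {p..q} f"
  from mono_on_sublevel_split[OF assms(1,2) this assms(4)] that show ?thesis by blast
next
  assume "antimono_on {p..q} f"
  then have "mono_on {p..q} (\<lambda>x. - f x)" by (rule antimono_on_imp_mono_on_uminus)
  moreover have "continuous_on {p..q} (\<lambda>x. - f x)" using assms(2) by (intro continuous_intros)
  ultimately show ?thesis
    using mono_on_sublevel_split[OF assms(1), of "\<lambda>x. - f x", OF _ _ assms(4)] that by auto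
qed

lemma norm_integral_split_le:
  fixes f :: "real \<Rightarrow> 'a::banach"
  assumes "f integrable_on {p..q}" and "p \<le> z" and "z \<le> q"
  shows "norm (integral {p..q} f) \<le> norm (integral {p..z} f) + norm (integral {z..q} f)"
  using Henstock_Kurzweil_Integration.integral_combine[OF assms(2,3,1)] norm_triangle_ineq
  by metis

lemma has_integral_abs_deriv_div_square:
  fixes f f' :: "real \<Rightarrow> real"
  assumes "p \<le> q"
    and df: "\<And>x. x \<in> {p..q} \<Longrightarrow> (f has_real_derivative f' x) (at x)"
    and nz: "\<And>x. x \<in> {p..q} \<Longrightarrow> f x \<noteq> 0"
    and sign: "constant_sign_on {p..q} f'"
  shows "((\<lambda>x. \<bar>f' x\<bar> / (f x)\<^sup>2) has_integral \<bar>1 / f p - 1 / f q\<bar>) {p..q}"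
proof -
  obtain \<sigma> :: real where \<sigma>: "\<bar>\<sigma>\<bar> = 1"
    and abs_eq: "\<And>x. x \<in> {p..q} \<Longrightarrow> \<bar>f' x\<bar> = \<sigma> * f' x"
  proof (cases "\<forall>x\<in>{p..q}. 0 \<le> f' x")
    case True
    then show ?thesis by (intro that[of 1]) auto
  next
    case False
    with sign have "\<forall>x\<in>{p..q}. f' x \<le> 0" unfolding constant_sign_on_def by auto
    then show ?thesis by (intro that[of "-1"]) auto
  qed
  have ftc: "((\<lambda>x. \<sigma> * (f' x / (f x)\<^sup>2)) has_integral
      (\<lambda>u. - \<sigma> / f u) q - (\<lambda>u. - \<sigma> / f u) p) {p..q}"
  proof (rule fundamental_theorem_of_calculus[OF \<open>p \<le> q\<close>])
    fix x assume x: "x \<in> {p..q}"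
    have "((\<lambda>u. - \<sigma> / f u) has_real_derivative \<sigma> * (f' x / (f x)\<^sup>2)) (at x)"
      using df[OF x] nz[OF x] by (auto intro!: derivative_eq_intros simp: power2_eq_square)
    then show "((\<lambda>u. - \<sigma> / f u) has_vector_derivative \<sigma> * (f' x / (f x)\<^sup>2)) (at x within {p..q})"
      by (simp add: has_real_derivative_iff_has_vector_derivative[symmetric]
          has_field_derivative_at_within)
  qed
  have eq: "- \<sigma> / f q - - \<sigma> / f p = \<sigma> * (1 / f p - 1 / f q)"
    by (simp add: algebra_simps)
  have int: "((\<lambda>x. \<bar>f' x\<bar> / (f x)\<^sup>2) has_integral \<sigma> * (1 / f p - 1 / f q)) {p..q}"
    unfolding eq[symmetric] using ftc by (rule has_integral_eq[rotated]) (simp add: abs_eq)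
  then have "0 \<le> \<sigma> * (1 / f p - 1 / f q)" by (rule has_integral_nonneg) simp
  then have "\<sigma> * (1 / f p - 1 / f q) = \<bar>1 / f p - 1 / f q\<bar>"
    using \<sigma> by (metis abs_mult abs_of_nonneg mult_1)
  with int show ?thesis by simp
qed

lemma van_der_corput_first_derivative:
  fixes \<phi> f f' :: "real \<Rightarrow> real"
  assumes "p \<le> q" and "0 < \<epsilon>"
    and d\<phi>: "\<And>x. x \<in> {p..q} \<Longrightarrow> (\<phi> has_real_derivative f x) (at x)"
    and df: "\<And>x. x \<in> {p..q} \<Longrightarrow> (f has_real_derivative f' x) (at x)"
    and sign: "constant_sign_on {p..q} f'"
    and big: "\<And>x. x \<in> {p..q} \<Longrightarrow> \<epsilon> \<le> \<bar>f x\<bar>"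
  shows "norm (integral {p..q} (\<lambda>u. cis (- \<phi> u))) \<le> 4 / \<epsilon>"
proof -
  define E where "E u = cis (- \<phi> u)" for u
  define G where "G u = complex_of_real (1 / f u) * (\<i> * E u)" for u
  define R where "R u = \<i> * E u * f' u / (f u)\<^sup>2" for u
  have nz: "f x \<noteq> 0" if "x \<in> {p..q}" for x
    using big[OF that] \<open>0 < \<epsilon>\<close> by auto
  have dE: "(E has_vector_derivative - \<i> * f x * E x) (at x within {p..q})" if "x \<in> {p..q}" for x
  proof -
    have "((\<lambda>u. - \<phi> u) has_real_derivative - f x) (at x within {p..q})"
      using has_field_derivative_at_within[OF DERIV_minus[OF d\<phi>[OF that]]] .
    then have "((\<lambda>u. - \<phi> u) has_derivative (\<lambda>t. t * - f x)) (at x within {p..q})"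
      unfolding has_field_derivative_def by (simp only: mult_commute_abs)
    from has_derivative_cis[OF this] show ?thesis
      unfolding E_def has_vector_derivative_def by (simp add: scaleR_conv_of_real algebra_simps)
  qed
  have dG: "(G has_vector_derivative E x - R x) (at x within {p..q})" if "x \<in> {p..q}" for x
  proof -
    have "((\<lambda>u. 1 / f u) has_real_derivative - f' x / (f x)\<^sup>2) (at x)"
      using df[OF that] nz[OF that] by (auto intro!: derivative_eq_intros simp: power2_eq_square)
    then have d_inv: "((\<lambda>u. 1 / f u) has_real_derivative - f' x / (f x)\<^sup>2) (at x within {p..q})"
      by (rule has_field_derivative_at_within)
    have "(G has_vector_derivative
        complex_of_real (1 / f x) * (\<i> * (- \<i> * f x * E x))
          + complex_of_real (- f' x / (f x)\<^sup>2) * (\<i> * E x)) (at x within {p..q})"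
      unfolding G_def
      by (intro has_vector_derivative_mult has_vector_derivative_mult_right dE[OF that]
            has_vector_derivative_of_real d_inv)
    moreover have "complex_of_real (1 / f x) * (\<i> * (- \<i> * f x * E x))
        + complex_of_real (- f' x / (f x)\<^sup>2) * (\<i> * E x) = E x - R x"
      using nz[OF that] unfolding R_def by (simp add: field_simps)
    ultimately show ?thesis by simp
  qed
  have ftc: "((\<lambda>x. E x - R x) has_integral G q - G p) {p..q}"
    using fundamental_theorem_of_calculus[OF \<open>p \<le> q\<close> dG] .
  have "continuous_on {p..q} \<phi>"
    using d\<phi> by (meson DERIV_isCont continuous_at_imp_continuous_on)
  then have IE: "E integrable_on {p..q}"
    unfolding E_def by (intro integrable_continuous_interval continuous_intros)
  have IR: "R integrable_on {p..q}"
    using integrable_diff[OF IE has_integral_integrable[OF ftc]] by simp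
  have "integral {p..q} E - integral {p..q} R = G q - G p"
    using integral_diff[OF IE IR] integral_unique[OF ftc] by simp
  then have split: "integral {p..q} E = (G q - G p) + integral {p..q} R"
    by (simp add: algebra_simps)
  have G_bound: "norm (G x) \<le> 1 / \<epsilon>" if "x \<in> {p..q}" for x
    using big[OF that] \<open>0 < \<epsilon>\<close> unfolding G_def E_def by (simp add: norm_mult norm_divide frac_le)
  have "norm (G q - G p) \<le> 2 / \<epsilon>"
    using G_bound[of p] G_bound[of q] \<open>p \<le> q\<close> norm_triangle_ineq4[of "G q" "G p"] by simp
  moreover have "norm (integral {p..q} R) \<le> \<bar>1 / f p - 1 / f q\<bar>"
  proof -
    note int = has_integral_abs_deriv_div_square[OF \<open>p \<le> q\<close> df nz sign]
    have "norm (R x) = \<bar>f' x\<bar> / (f x)\<^sup>2" for x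
      by (simp add: R_def E_def norm_mult norm_divide norm_power)
    then have "norm (integral {p..q} R) \<le> integral {p..q} (\<lambda>x. \<bar>f' x\<bar> / (f x)\<^sup>2)"
      using integral_norm_bound_integral[OF IR has_integral_integrable[OF int]] by simp
    with integral_unique[OF int] show ?thesis by simp
  qed
  moreover have "\<bar>1 / f p - 1 / f q\<bar> \<le> 2 / \<epsilon>"
  proof -
    have "1 / \<bar>f p\<bar> \<le> 1 / \<epsilon>" "1 / \<bar>f q\<bar> \<le> 1 / \<epsilon>"
      using big[of p] big[of q] \<open>p \<le> q\<close> \<open>0 < \<epsilon>\<close> by (simp_all add: frac_le)
    then show ?thesis using abs_triangle_ineq4[of "1 / f p" "1 / f q"] by simp
  qed
  moreover have "norm (integral {p..q} E) \<le> norm (G q - G p) + norm (integral {p..q} R)"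
    unfolding split by (rule norm_triangle_ineq)
  ultimately show ?thesis unfolding E_def by linarith
qed

lemma van_der_corput_with_sublevel_bound:
  fixes \<phi> f f' :: "real \<Rightarrow> real"
  assumes "p \<le> q" and "0 < \<epsilon>" and "0 \<le> L"
    and d\<phi>: "\<And>x. x \<in> {p..q} \<Longrightarrow> (\<phi> has_real_derivative f x) (at x)"
    and df: "\<And>x. x \<in> {p..q} \<Longrightarrow> (f has_real_derivative f' x) (at x)"
    and sign: "constant_sign_on {p..q} f'"
    and sublevel: "\<And>r s. p \<le> r \<Longrightarrow> r \<le> s \<Longrightarrow> s \<le> q \<Longrightarrow>
      \<forall>x\<in>{r..s}. \<bar>f x\<bar> \<le> \<epsilon> \<Longrightarrow> s - r \<le> L"
  shows "norm (integral {p..q} (\<lambda>u. cis (- \<phi> u))) \<le> 8 / \<epsilon> + L"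
proof -
  define E where "E u = cis (- \<phi> u)" for u
  have "continuous_on {p..q} \<phi>" "continuous_on {p..q} f"
    using d\<phi> df by (meson DERIV_isCont continuous_at_imp_continuous_on)+
  then have cE: "continuous_on {p..q} E" and cf: "continuous_on {p..q} f"
    unfolding E_def by (auto intro: continuous_intros)
  obtain r s where rs: "p \<le> r" "r \<le> s" "s \<le> q"
    and left: "p = r \<or> (\<forall>x\<in>{p..r}. \<epsilon> \<le> \<bar>f x\<bar>)"
    and middle: "r = s \<or> (\<forall>x\<in>{r..s}. \<bar>f x\<bar> \<le> \<epsilon>)"
    and right: "s = q \<or> (\<forall>x\<in>{s..q}. \<epsilon> \<le> \<bar>f x\<bar>)"
    using sublevel_split[OF \<open>p \<le> q\<close> cf mono_or_antimono_of_constant_sign_deriv[OF df sign]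
        less_imp_le[OF \<open>0 < \<epsilon>\<close>]] .
  have outer: "norm (integral {a..b} E) \<le> 4 / \<epsilon>"
    if "p \<le> a" "a \<le> b" "b \<le> q" "a = b \<or> (\<forall>x\<in>{a..b}. \<epsilon> \<le> \<bar>f x\<bar>)" for a b
    using that(4)
  proof
    assume "\<forall>x\<in>{a..b}. \<epsilon> \<le> \<bar>f x\<bar>"
    with that(1-3) show ?thesis
      unfolding E_def
      by (intro van_der_corput_first_derivative[OF \<open>a \<le> b\<close> \<open>0 < \<epsilon>\<close>, of _ f f'] d\<phi> df
          constant_sign_on_subset[OF sign]) auto
  qed (use \<open>0 < \<epsilon>\<close> in simp)
  have "norm (integral {r..s} E) \<le> 1 * (s - r)"
    using rs cE by (intro integral_bound) (auto intro: continuous_on_subset simp: E_def)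
  also have "\<dots> \<le> L"
    using middle rs \<open>0 \<le> L\<close> by (auto intro: sublevel)
  finally have "norm (integral {r..s} E) \<le> L" .
  moreover have "E integrable_on {r..q}"
    using cE rs by (intro integrable_continuous_interval) (auto intro: continuous_on_subset)
  then have "norm (integral {p..q} E)
      \<le> norm (integral {p..r} E) + (norm (integral {r..s} E) + norm (integral {s..q} E))"
    using norm_integral_split_le[OF integrable_continuous_interval[OF cE] rs(1)]
      norm_integral_split_le[of E r q s] rs by fastforce
  ultimately show ?thesis
    using outer[OF order.refl rs(1) _ left] outer[OF _ rs(3) order.refl right] rs
    unfolding E_def by fastforce
qed

lemma powr_diff_one_eq: "0 < x \<Longrightarrow> x powr (a - 1) = x powr (a - 3) * x\<^sup>2"
  for x a :: real
proof -
  assume "0 < x"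
  have "x powr (a - 1) = x powr ((a - 3) + 2)" by simp
  also have "\<dots> = x powr (a - 3) * x powr 2" by (rule powr_add)
  finally show ?thesis using \<open>0 < x\<close> by simp
qed

lemma sublevel_length_right_half:
  fixes f g g' :: "real \<Rightarrow> real"
  assumes "0 < \<delta>" and "\<delta> \<le> m" and "m \<le> s" and "s \<le> 2 * m" and "3 \<le> M" and "0 < c"
    and "0 \<le> g m"
    and df: "\<And>x. x \<in> {m..s} \<Longrightarrow> (f has_real_derivative g x / x\<^sup>2) (at x)"
    and dg: "\<And>x. x \<in> {m..s} \<Longrightarrow> (g has_real_derivative g' x) (at x)"
    and g'_ge: "\<And>x. x \<in> {m..s} \<Longrightarrow> c * x powr (M - 1) \<le> g' x"
    and small: "\<And>x. x \<in> {m..s} \<Longrightarrow> \<bar>f x\<bar> \<le> \<epsilon>"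
  shows "c * \<delta> powr (M - 3) * (s - m)\<^sup>2 \<le> 16 * \<epsilon>"
proof -
  define \<kappa> where "\<kappa> = c * \<delta> powr (M - 3) / 4"
  have f'_ge: "\<kappa> * (v - m) \<le> g v / v\<^sup>2" if v: "v \<in> {m..s}" for v
  proof -
    have "c * m powr (M - 1) \<le> g' x" if "x \<in> {m..v}" for x
      using order_trans[OF mult_left_mono[OF powr_mono2] g'_ge] that v assms(1,2,5,6) by auto
    then have "c * m powr (M - 1) * v - c * m powr (M - 1) * m \<le> g v - g m"
      using v by (intro increment_le_of_deriv_le[where f'="\<lambda>_. c * m powr (M - 1)"])
        (auto intro!: derivative_eq_intros dg)
    with \<open>0 \<le> g m\<close> have g_ge: "c * m powr (M - 1) * (v - m) \<le> g v"
      by (simp add: algebra_simps)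
    have "v\<^sup>2 \<le> 4 * m\<^sup>2"
      using v assms(1,2,4) power_mono[of v "2 * m" 2] by (simp add: power_mult_distrib)
    have "\<kappa> * (v - m) \<le> c * m powr (M - 3) / 4 * (v - m)"
      unfolding \<kappa>_def using v assms(1,2,5,6) powr_mono2[of "M - 3" \<delta> m]
      by (intro mult_right_mono divide_right_mono mult_left_mono) auto
    also have "\<dots> = c * m powr (M - 1) * (v - m) / (4 * m\<^sup>2)"
      using assms(1,2) by (simp add: powr_diff_one_eq)
    also have "\<dots> \<le> c * m powr (M - 1) * (v - m) / v\<^sup>2"
      using v assms(1,2,6) \<open>v\<^sup>2 \<le> 4 * m\<^sup>2\<close> by (intro divide_left_mono) auto
    also have "\<dots> \<le> g v / v\<^sup>2"
      using g_ge by (rule divide_right_mono) simp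
    finally show ?thesis .
  qed
  have "\<kappa> * (s - m)\<^sup>2 / 2 - \<kappa> * (m - m)\<^sup>2 / 2 \<le> f s - f m"
    using \<open>m \<le> s\<close> f'_ge
    by (intro increment_le_of_deriv_le[where f'="\<lambda>x. \<kappa> * (x - m)"])
      (auto intro!: derivative_eq_intros df)
  also have "\<dots> \<le> 2 * \<epsilon>"
    using small[of s] small[of m] \<open>m \<le> s\<close> by (auto simp: abs_le_iff)
  finally show ?thesis
    unfolding \<kappa>_def by (simp add: field_simps)
qed

lemma sublevel_length_left_half:
  fixes f g g' :: "real \<Rightarrow> real"
  assumes "0 < \<delta>" and "\<delta> \<le> r" and "r \<le> m" and "3 \<le> M" and "0 < c"
    and "g m \<le> 0"
    and df: "\<And>x. x \<in> {r..m} \<Longrightarrow> (f has_real_derivative g x / x\<^sup>2) (at x)"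
    and dg: "\<And>x. x \<in> {r..m} \<Longrightarrow> (g has_real_derivative g' x) (at x)"
    and g'_ge: "\<And>x. x \<in> {r..m} \<Longrightarrow> c * x powr (M - 1) \<le> g' x"
    and small: "\<And>x. x \<in> {r..m} \<Longrightarrow> \<bar>f x\<bar> \<le> \<epsilon>"
  shows "c * \<delta> powr (M - 3) * (m - r)\<^sup>2 \<le> 4 * \<epsilon>"
proof -
  define \<kappa> where "\<kappa> = c * \<delta> powr (M - 3)"
  have f'_le: "g v / v\<^sup>2 \<le> - \<kappa> * (m - v)" if v: "v \<in> {r..m}" for v
  proof -
    have "0 < v" using v assms(1,2) by auto
    have "c * v powr (M - 1) \<le> g' x" if "x \<in> {v..m}" for x
      using order_trans[OF mult_left_mono[OF powr_mono2] g'_ge] that v assms(4,5) \<open>0 < v\<close> by auto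
    then have "c * v powr (M - 1) * m - c * v powr (M - 1) * v \<le> g m - g v"
      using v by (intro increment_le_of_deriv_le[where f'="\<lambda>_. c * v powr (M - 1)"])
        (auto intro!: derivative_eq_intros dg)
    with \<open>g m \<le> 0\<close> have g_le: "g v \<le> - c * v powr (M - 1) * (m - v)"
      by (simp add: algebra_simps)
    have "g v / v\<^sup>2 \<le> - c * v powr (M - 1) * (m - v) / v\<^sup>2"
      using g_le by (rule divide_right_mono) simp
    also have "\<dots> = - c * v powr (M - 3) * (m - v)"
      using \<open>0 < v\<close> by (simp add: powr_diff_one_eq)
    also have "\<dots> \<le> - \<kappa> * (m - v)"
      unfolding \<kappa>_def using v assms(1,2,4,5)
      by (simp add: mult_left_mono mult_right_mono powr_mono2)
    finally show ?thesis .
  qed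
  have "f m - f r \<le> \<kappa> * (m - m)\<^sup>2 / 2 - \<kappa> * (m - r)\<^sup>2 / 2"
    using \<open>r \<le> m\<close> f'_le
    by (intro increment_le_of_deriv_le[where g'="\<lambda>x. - \<kappa> * (m - x)"])
      (auto intro!: derivative_eq_intros df simp: field_simps)
  then have "\<kappa> * (m - r)\<^sup>2 / 2 \<le> f r - f m" by simp
  also have "\<dots> \<le> 2 * \<epsilon>"
    using small[of r] small[of m] \<open>r \<le> m\<close> by (auto simp: abs_le_iff)
  finally show ?thesis
    unfolding \<kappa>_def by (simp add: field_simps)
qed

lemma sublevel_length_bound:
  fixes f g g' :: "real \<Rightarrow> real"
  assumes "0 < \<delta>" and "\<delta> \<le> r" and "r \<le> s" and "3 \<le> M" and "0 < c"
    and df: "\<And>x. x \<in> {r..s} \<Longrightarrow> (f has_real_derivative g x / x\<^sup>2) (at x)"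
    and dg: "\<And>x. x \<in> {r..s} \<Longrightarrow> (g has_real_derivative g' x) (at x)"
    and g'_ge: "\<And>x. x \<in> {r..s} \<Longrightarrow> c * x powr (M - 1) \<le> g' x"
    and small: "\<And>x. x \<in> {r..s} \<Longrightarrow> \<bar>f x\<bar> \<le> \<epsilon>"
  shows "(s - r)\<^sup>2 \<le> 64 * \<epsilon> / (c * \<delta> powr (M - 3))"
proof -
  define m where "m = (r + s) / 2"
  have m: "r \<le> m" "m \<le> s" "\<delta> \<le> m" "s \<le> 2 * m"
    using assms(1-3) unfolding m_def by auto
  have "0 \<le> \<epsilon>"
    using small[of r] abs_ge_zero[of "f r"] \<open>r \<le> s\<close> by auto
  have "c * \<delta> powr (M - 3) * (s - r)\<^sup>2 \<le> 64 * \<epsilon>"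
  proof (cases "0 \<le> g m")
    case True
    have "c * \<delta> powr (M - 3) * (s - m)\<^sup>2 \<le> 16 * \<epsilon>"
      using True m assms(1,4,5) df dg g'_ge small
      by (intro sublevel_length_right_half[where f=f and g=g and g'=g']) auto
    moreover have "c * \<delta> powr (M - 3) * (s - r)\<^sup>2 = 4 * (c * \<delta> powr (M - 3) * (s - m)\<^sup>2)"
      unfolding m_def by (simp add: power2_eq_square field_simps)
    ultimately show ?thesis by linarith
  next
    case False
    have "c * \<delta> powr (M - 3) * (m - r)\<^sup>2 \<le> 4 * \<epsilon>"
      using False m assms(1,2,4,5) df dg g'_ge small
      by (intro sublevel_length_left_half[where f=f and g=g and g'=g']) auto
    moreover have "c * \<delta> powr (M - 3) * (s - r)\<^sup>2 = 4 * (c * \<delta> powr (M - 3) * (m - r)\<^sup>2)"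
      unfolding m_def by (simp add: power2_eq_square field_simps)
    ultimately show ?thesis using \<open>0 \<le> \<epsilon>\<close> by linarith
  qed
  then show ?thesis
    using assms(1,5) by (simp add: field_simps)
qed

lemma norm_integral_le_by_sign_split:
  fixes E :: "real \<Rightarrow> 'a::banach" and h :: "real \<Rightarrow> real"
  assumes "p \<le> q" and "E integrable_on {p..q}" and "continuous_on {p..q} h"
    and "mono_on {p..q} h \<or> antimono_on {p..q} h"
    and piece: "\<And>r s. p \<le> r \<Longrightarrow> r \<le> s \<Longrightarrow> s \<le> q \<Longrightarrow> constant_sign_on {r..s} h \<Longrightarrow>
      norm (integral {r..s} E) \<le> B"
  shows "norm (integral {p..q} E) \<le> 2 * B"
proof -
  obtain z where z: "z \<in> {p..q}" "constant_sign_on {p..z} h" "constant_sign_on {z..q} h"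
    using constant_sign_on_split[OF assms(1,3,4)] .
  then have "norm (integral {p..q} E) \<le> norm (integral {p..z} E) + norm (integral {z..q} E)"
    using norm_integral_split_le[OF assms(2)] by simp
  also have "\<dots> \<le> B + B"
    using z \<open>p \<le> q\<close> by (intro add_mono piece) auto
  finally show ?thesis by simp
qed

locale trinomial_phase =
  fixes b1 b2 M A1 A2 A3 :: real
  assumes b1_pos: "0 < b1" and b2_pos: "0 < b2" and b_sum: "b1 + b2 = 1"
    and M_ge: "3 \<le> M" and A3_pos: "0 < A3"
begin

definition phase :: "real \<Rightarrow> real" where
  "phase u = A1 * u powr b1 + A2 * u powr b2 + A3 * u powr M"

definition phase' :: "real \<Rightarrow> real" where
  "phase' u = A1 * b1 * u powr (b1 - 1) + A2 * b2 * u powr (b2 - 1) + A3 * M * u powr (M - 1)"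

definition curv :: "real \<Rightarrow> real" where
  "curv u = A1 * b1 * (b1 - 1) * u powr b1 + A2 * b2 * (b2 - 1) * u powr b2
    + A3 * M * (M - 1) * u powr M"

definition curv_factor :: "real \<Rightarrow> real" where
  "curv_factor u = A1 * b1 * (b1 - 1) + A2 * b2 * (b2 - 1) * u powr (b2 - b1)
    + A3 * M * (M - 1) * u powr (M - b1)"

definition curv_factor_slope :: "real \<Rightarrow> real" where
  "curv_factor_slope u = A2 * b2 * (b2 - 1) * (b2 - b1)
    + A3 * M * (M - 1) * (M - b1) * u powr (M - b2)"

lemma has_real_derivative_phase:
  "0 < x \<Longrightarrow> (phase has_real_derivative phase' x) (at x)"
  unfolding phase_def phase'_def
  by (auto intro!: derivative_eq_intros)

lemma has_real_derivative_phase':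
  assumes "0 < x"
  shows "(phase' has_real_derivative curv x / x\<^sup>2) (at x)"
proof -
  have "x powr (b - 2) = x powr b / x\<^sup>2" for b
    using powr_diff[of x b 2] assms by simp
  with assms show ?thesis
    unfolding phase'_def curv_def
    by (auto intro!: derivative_eq_intros simp: add_divide_distrib mult_ac)
qed

(* Since b1 + b2 = 1, the A1 and A2 terms cancel on the right-hand side. *)
lemma has_real_derivative_curv:
  assumes "0 < x"
  shows "(curv has_real_derivative
    M * (M - b1) * (M - b2) * A3 * x powr (M - 1) - b1 * b2 * phase' x) (at x)"
proof -
  have b2: "b2 = 1 - b1" using b_sum by simp
  from assms show ?thesis
    unfolding curv_def phase'_def
    by (auto intro!: derivative_eq_intros simp: b2 algebra_simps)
qed

lemma curv_eq: "curv x = x powr b1 * curv_factor x"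
proof -
  have "x powr b1 * x powr (b - b1) = x powr b" for b
    by (simp add: powr_add[symmetric])
  then show ?thesis
    unfolding curv_def curv_factor_def by (simp add: algebra_simps)
qed

lemma has_real_derivative_curv_factor:
  assumes "0 < x"
  shows "(curv_factor has_real_derivative x powr (b2 - b1 - 1) * curv_factor_slope x) (at x)"
proof -
  have "x powr (b2 - b1 - 1) * x powr (M - b2) = x powr (M - b1 - 1)"
    by (simp add: powr_add[symmetric] algebra_simps)
  with assms show ?thesis
    unfolding curv_factor_def curv_factor_slope_def
    by (auto intro!: derivative_eq_intros simp: algebra_simps)
qed

lemma curv_factor_slope_monotone:
  "mono_on {0<..} curv_factor_slope \<or> antimono_on {0<..} curv_factor_slope"
proof -
  have "M - b2 > 0" using M_ge b_sum b1_pos by simp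
  then have "x powr (M - b2) \<le> y powr (M - b2)" if "x \<in> {0<..}" "x \<le> y" for x y
    using that by (intro powr_mono2) auto
  then show ?thesis
    unfolding curv_factor_slope_def monotone_on_def
    by (cases "0 \<le> A3 * M * (M - 1) * (M - b1)") (auto intro: mult_left_mono mult_left_mono_neg)
qed

lemma continuous_on_cis_phase: "continuous_on {0..} (\<lambda>u. cis (- phase u))"
  unfolding phase_def using b1_pos b2_pos M_ge
  by (intro continuous_intros continuous_on_powr') auto

lemma integrable_cis_phase: "0 \<le> p \<Longrightarrow> (\<lambda>u. cis (- phase u)) integrable_on {p..q}"
  by (rule integrable_continuous_interval, rule continuous_on_subset[OF continuous_on_cis_phase])
    auto

definition scale :: real where
  "scale = A3 powr (- 1 / M)"

lemma scale_pos: "0 < scale"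
  unfolding scale_def using A3_pos by simp

lemma A3_mult_scale_powr: "A3 * scale powr (M - a) = scale powr (- a)"
proof -
  have "A3 * scale powr (M - a) = A3 powr 1 * A3 powr (- 1 / M * (M - a))"
    unfolding scale_def powr_powr using A3_pos by simp
  also have "\<dots> = A3 powr (1 + - 1 / M * (M - a))"
    by (rule powr_add[symmetric])
  also have "1 + - 1 / M * (M - a) = - 1 / M * - a"
    using M_ge by (simp add: field_simps)
  finally show ?thesis
    unfolding scale_def powr_powr .
qed

lemma phase'_sublevel_length:
  assumes "scale \<le> r" and "r \<le> s" and small: "\<forall>x\<in>{r..s}. \<bar>phase' x\<bar> \<le> 1 / scale"
  shows "s - r \<le> 8 * scale"
proof -
  have pos: "0 < x" if "x \<in> {r..s}" for x
    using that assms(1) scale_pos by auto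
  have "b1 * b2 \<le> 1"
    using b1_pos b2_pos b_sum by (intro mult_le_one) auto
  have "3 * 1 * 1 \<le> M * (M - b1) * (M - b2)"
    using b1_pos b2_pos b_sum M_ge by (intro mult_mono) auto
  have "(s - r)\<^sup>2 \<le> 64 * (1 / scale) / (A3 * scale powr (M - 3))"
  proof (rule sublevel_length_bound[OF scale_pos assms(1,2) M_ge A3_pos])
    fix x assume x: "x \<in> {r..s}"
    show "(phase' has_real_derivative curv x / x\<^sup>2) (at x)"
      using has_real_derivative_phase'[OF pos[OF x]] .
    show "(curv has_real_derivative
        M * (M - b1) * (M - b2) * A3 * x powr (M - 1) - b1 * b2 * phase' x) (at x)"
      using has_real_derivative_curv[OF pos[OF x]] .
    show "\<bar>phase' x\<bar> \<le> 1 / scale" using small x by blast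
    have "b1 * b2 * phase' x \<le> b1 * b2 * \<bar>phase' x\<bar>"
      using b1_pos b2_pos by (intro mult_left_mono) auto
    also have "\<dots> \<le> 1 * (1 / scale)"
      using \<open>b1 * b2 \<le> 1\<close> small x scale_pos by (intro mult_mono) auto
    also have "\<dots> = A3 * scale powr (M - 1)"
      using A3_mult_scale_powr[of 1] scale_pos by (simp add: powr_minus_divide)
    also have "\<dots> \<le> A3 * x powr (M - 1)"
      using x assms(1) scale_pos M_ge A3_pos by (intro mult_left_mono powr_mono2) auto
    finally have "b1 * b2 * phase' x \<le> A3 * x powr (M - 1)" .
    moreover have "2 * (A3 * x powr (M - 1)) \<le> M * (M - b1) * (M - b2) * A3 * x powr (M - 1)"
      using \<open>3 * 1 * 1 \<le> M * (M - b1) * (M - b2)\<close> A3_pos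
        mult_right_mono[of 2 "M * (M - b1) * (M - b2)" "A3 * x powr (M - 1)"]
      by (simp add: mult.assoc)
    ultimately show "A3 * x powr (M - 1) \<le> M * (M - b1) * (M - b2) * A3 * x powr (M - 1) - b1 * b2 * phase' x"
      by linarith
  qed
  also have "\<dots> = (8 * scale)\<^sup>2"
  proof -
    have eq: "A3 * scale powr (M - 3) = 1 / scale ^ 3"
      unfolding A3_mult_scale_powr using scale_pos by (simp add: powr_minus_divide)
    show ?thesis
      unfolding eq using scale_pos by (simp add: power2_eq_square power3_eq_cube)
  qed
  finally have "(s - r)\<^sup>2 \<le> (8 * scale)\<^sup>2" .
  then show ?thesis
    by (rule power2_le_imp_le) (use scale_pos in simp)
qed

lemma norm_integral_le_of_constant_sign_curv:
  assumes "scale \<le> p" and "p \<le> q" and "constant_sign_on {p..q} curv"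
  shows "norm (integral {p..q} (\<lambda>u. cis (- phase u))) \<le> 16 * scale"
proof -
  have pos: "0 < x" if "x \<in> {p..q}" for x
    using that assms(1) scale_pos by auto
  have "constant_sign_on {p..q} (\<lambda>x. curv x / x\<^sup>2)"
    using assms(3) unfolding constant_sign_on_def
    by (auto simp: divide_nonneg_nonneg divide_nonpos_nonneg)
  then have "norm (integral {p..q} (\<lambda>u. cis (- phase u))) \<le> 8 / (1 / scale) + 8 * scale"
  proof (rule van_der_corput_with_sublevel_bound[OF assms(2), rotated 4])
    show "0 < 1 / scale" "0 \<le> 8 * scale"
      using scale_pos by auto
  next
    fix x assume "x \<in> {p..q}"
    then show "(phase has_real_derivative phase' x) (at x)"
      and "(phase' has_real_derivative curv x / x\<^sup>2) (at x)"
      using pos has_real_derivative_phase has_real_derivative_phase' by auto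
  next
    fix r s assume "p \<le> r" "r \<le> s" "s \<le> q" "\<forall>x\<in>{r..s}. \<bar>phase' x\<bar> \<le> 1 / scale"
    then show "s - r \<le> 8 * scale"
      using assms(1) by (intro phase'_sublevel_length) auto
  qed
  then show ?thesis by simp
qed

lemma norm_integral_le_of_constant_sign_slope:
  assumes "scale \<le> p" and "p \<le> q" and "constant_sign_on {p..q} curv_factor_slope"
  shows "norm (integral {p..q} (\<lambda>u. cis (- phase u))) \<le> 2 * (16 * scale)"
proof (rule norm_integral_le_by_sign_split[OF assms(2)])
  have pos: "0 < x" if "x \<in> {p..q}" for x
    using that assms(1) scale_pos by auto
  show "(\<lambda>u. cis (- phase u)) integrable_on {p..q}"
    using assms(1) scale_pos by (intro integrable_cis_phase) simp
  show "continuous_on {p..q} curv_factor"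
    using has_real_derivative_curv_factor pos
    by (meson DERIV_isCont continuous_at_imp_continuous_on)
  have "constant_sign_on {p..q} (\<lambda>x. x powr (b2 - b1 - 1) * curv_factor_slope x)"
    using pos by (intro constant_sign_on_mult_pos[OF assms(3)]) auto
  then show "mono_on {p..q} curv_factor \<or> antimono_on {p..q} curv_factor"
    using has_real_derivative_curv_factor pos
    by (intro mono_or_antimono_of_constant_sign_deriv) auto
  fix r s assume "p \<le> r" "r \<le> s" "s \<le> q" "constant_sign_on {r..s} curv_factor"
  moreover from this have "constant_sign_on {r..s} curv"
    unfolding curv_eq by (intro constant_sign_on_mult_pos) (use assms(1) scale_pos in auto)
  ultimately show "norm (integral {r..s} (\<lambda>u. cis (- phase u))) \<le> 16 * scale"
    using assms(1) by (intro norm_integral_le_of_constant_sign_curv) auto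
qed

lemma norm_integral_tail_le:
  assumes "scale \<le> q"
  shows "norm (integral {scale..q} (\<lambda>u. cis (- phase u))) \<le> 2 * (2 * (16 * scale))"
proof (rule norm_integral_le_by_sign_split[OF assms])
  show "(\<lambda>u. cis (- phase u)) integrable_on {scale..q}"
    using scale_pos by (intro integrable_cis_phase) simp
  show "continuous_on {scale..q} curv_factor_slope"
    unfolding curv_factor_slope_def using scale_pos by (auto intro!: continuous_intros)
  show "mono_on {scale..q} curv_factor_slope \<or> antimono_on {scale..q} curv_factor_slope"
    using curv_factor_slope_monotone scale_pos
    by (auto intro: monotone_on_subset)
qed (use norm_integral_le_of_constant_sign_slope in auto)

lemma norm_integral_cis_phase_le: "norm (integral {0..1} (\<lambda>u. cis (- phase u))) \<le> 65 * scale"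
proof (cases "scale \<le> 1")
  case True
  have "norm (integral {0..1} (\<lambda>u. cis (- phase u)))
      \<le> norm (integral {0..scale} (\<lambda>u. cis (- phase u)))
        + norm (integral {scale..1} (\<lambda>u. cis (- phase u)))"
    using True scale_pos by (intro norm_integral_split_le integrable_cis_phase) auto
  also have "\<dots> \<le> 1 * (scale - 0) + 2 * (2 * (16 * scale))"
    using True scale_pos continuous_on_cis_phase
    by (intro add_mono norm_integral_tail_le integral_bound) (auto intro: continuous_on_subset)
  finally show ?thesis by simp
next
  case False
  have "norm (integral {0..1} (\<lambda>u. cis (- phase u))) \<le> 1 * (1 - 0)"
    using continuous_on_cis_phase by (intro integral_bound) (auto intro: continuous_on_subset)
  with False scale_pos show ?thesis by simp
qed

end

lemma norm_integral_cis_trinomial_le: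
  fixes b1 b2 M A1 A2 A3 :: real
  assumes "0 < b1" and "0 < b2" and "b1 + b2 = 1" and "3 \<le> M" and "A3 \<noteq> 0"
  shows "norm (integral {0..1} (\<lambda>u. cis (- (A1 * u powr b1 + A2 * u powr b2 + A3 * u powr M))))
    \<le> 65 * \<bar>A3\<bar> powr (- 1 / M)"
proof -
  have pos_case:
    "norm (integral {0..1} (\<lambda>u. cis (- (B1 * u powr b1 + B2 * u powr b2 + B3 * u powr M))))
      \<le> 65 * B3 powr (- 1 / M)" if "0 < B3" for B1 B2 B3
  proof -
    interpret trinomial_phase b1 b2 M B1 B2 B3
      using assms(1-4) that by unfold_locales
    show ?thesis
      using norm_integral_cis_phase_le unfolding phase_def scale_def .
  qed
  show ?thesis
  proof (cases "0 < A3")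
    case True
    with pos_case show ?thesis by simp
  next
    case False
    have "(\<lambda>u. cis (- (A1 * u powr b1 + A2 * u powr b2 + A3 * u powr M)))
        = (\<lambda>u. cnj (cis (- (- A1 * u powr b1 + - A2 * u powr b2 + - A3 * u powr M))))"
      by (simp add: cis_cnj algebra_simps)
    then have "norm (integral {0..1} (\<lambda>u. cis (- (A1 * u powr b1 + A2 * u powr b2 + A3 * u powr M))))
        = norm (integral {0..1} (\<lambda>u. cis (- (- A1 * u powr b1 + - A2 * u powr b2 + - A3 * u powr M))))"
      by (simp only: integral_cnj[symmetric] complex_mod_cnj)
    with False assms(5) pos_case[of "- A3" "- A1" "- A2"] show ?thesis by simp
  qed
qed

lemma has_integral_powr_substitution:
  fixes F :: "real \<Rightarrow> 'a::euclidean_space"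
  assumes "0 < a" and "continuous_on {0..1} F"
  shows "((\<lambda>t. t powr (a - 1) *\<^sub>R F (t powr a)) has_integral integral {0..1} F /\<^sub>R a) {0..1}"
proof -
  have "((\<lambda>t. (a * t powr (a - 1)) *\<^sub>R F (t powr a)) has_integral
      integral {0 powr a..1 powr a} F - integral {1 powr a..0 powr a} F) {0..1}"
  proof (rule has_integral_substitution_general[of "{0}"])
    show "(\<lambda>t. t powr a) ` {0..1} \<subseteq> {0..1}"
      using assms(1) by (auto intro!: powr_le1)
    show "continuous_on {0..1} (\<lambda>t. t powr a)"
      using assms(1) by (intro continuous_intros continuous_on_powr') auto
    fix x :: real assume "x \<in> {0..1} - {0}"
    then show "((\<lambda>t. t powr a) has_real_derivative a * x powr (a - 1)) (at x within {0..1})"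
      by (intro has_field_derivative_at_within[OF has_real_derivative_powr]) auto
  qed (use assms in auto)
  then have "((\<lambda>t. (a * t powr (a - 1)) *\<^sub>R F (t powr a)) has_integral integral {0..1} F) {0..1}"
    using assms(1) by simp
  from has_integral_cmul[OF this, of "1 / a"]
  have "((\<lambda>t. (1 / a) *\<^sub>R ((a * t powr (a - 1)) *\<^sub>R F (t powr a))) has_integral
      (1 / a) *\<^sub>R integral {0..1} F) {0..1}" .
  moreover have "(\<lambda>t. (1 / a) *\<^sub>R ((a * t powr (a - 1)) *\<^sub>R F (t powr a)))
      = (\<lambda>t. t powr (a - 1) *\<^sub>R F (t powr a))"
    using assms(1) by (simp add: fun_eq_iff)
  moreover have "(1 / a) *\<^sub>R integral {0..1} F = integral {0..1} F /\<^sub>R a"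
    by (simp add: inverse_eq_divide)
  ultimately show ?thesis by simp
qed

theorem lemma3p1:
  fixes \<alpha>1 \<alpha>2 m :: real
  assumes "\<alpha>1 > 0" and "\<alpha>2 > 0" and "\<alpha>1 \<noteq> \<alpha>2"
    and "m \<ge> 3 * (\<alpha>1 + \<alpha>2)"
  shows "\<exists>C > 0. \<forall>A1 A2 A3 :: real. A3 \<noteq> 0 \<longrightarrow>
           cmod (integral {0..1} (\<lambda>t::real.
               cis (- (A1 * t powr \<alpha>1 + A2 * t powr \<alpha>2 + A3 * t powr m))
               * complex_of_real (t powr (\<alpha>1 + \<alpha>2 - 1))))
           \<le> C * \<bar>A3\<bar> powr (- ((\<alpha>1 + \<alpha>2) / m))"
proof -
  define a where "a = \<alpha>1 + \<alpha>2"
  have "0 < a" "3 \<le> m / a" and exponent: "- 1 / (m / a) = - ((\<alpha>1 + \<alpha>2) / m)"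
    using assms unfolding a_def by (auto simp: field_simps)
  show ?thesis
  proof (intro exI[of _ "65 / a"] conjI allI impI)
    show "0 < 65 / a" using \<open>0 < a\<close> by simp
    fix A1 A2 A3 :: real assume "A3 \<noteq> 0"
    define F where "F u = cis (- (A1 * u powr (\<alpha>1 / a) + A2 * u powr (\<alpha>2 / a) + A3 * u powr (m / a)))" for u
    have "continuous_on {0..1} F"
      unfolding F_def using assms \<open>3 \<le> m / a\<close> \<open>0 < a\<close>
      by (intro continuous_intros continuous_on_powr') auto
    from has_integral_powr_substitution[OF \<open>0 < a\<close> this]
    have "integral {0..1} (\<lambda>t. cis (- (A1 * t powr \<alpha>1 + A2 * t powr \<alpha>2 + A3 * t powr m))
        * complex_of_real (t powr (\<alpha>1 + \<alpha>2 - 1))) = integral {0..1} F /\<^sub>R a"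
      using \<open>0 < a\<close> unfolding F_def a_def
      by (intro integral_unique) (simp add: powr_powr scaleR_conv_of_real mult.commute)
    then have "cmod (integral {0..1} (\<lambda>t. cis (- (A1 * t powr \<alpha>1 + A2 * t powr \<alpha>2 + A3 * t powr m))
        * complex_of_real (t powr (\<alpha>1 + \<alpha>2 - 1)))) = norm (integral {0..1} F) / a"
      using \<open>0 < a\<close> by (simp add: divide_inverse_commute)
    also have "\<dots> \<le> 65 * \<bar>A3\<bar> powr (- ((\<alpha>1 + \<alpha>2) / m)) / a"
      unfolding F_def exponent[symmetric] using assms \<open>3 \<le> m / a\<close> \<open>0 < a\<close> \<open>A3 \<noteq> 0\<close>
      by (intro divide_right_mono norm_integral_cis_trinomial_le)
        (auto simp: a_def add_divide_distrib[symmetric])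
    finally show "cmod (integral {0..1} (\<lambda>t. cis (- (A1 * t powr \<alpha>1 + A2 * t powr \<alpha>2 + A3 * t powr m))
        * complex_of_real (t powr (\<alpha>1 + \<alpha>2 - 1)))) \<le> 65 / a * \<bar>A3\<bar> powr (- ((\<alpha>1 + \<alpha>2) / m))"
      by simp
  qed
qed

end
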